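(* Let $n\ge2$, let $P$ be a partial $n$-Metric on a set $X$, and let $\{x_i\}_{i\in\mathbb{N}}$, $\{y_i\}_{i\in\mathbb{N}}$ be sequences in $X$ forming a Cauchy pair with central distance $r$. Then $\{x_i\}$ and $\{y_i\}$ are both Cauchy sequences with central distance $r$. Moreover, if $a$ is a limit (respectively, a special limit) of $\{x_i\}$, then $a$ is a limit (respectively, a special limit) of $\{y_i\}$.
   Context: Notation: $\langle a\rangle^k$ denotes the $k$-tuple $(a,\dots,a)$ inserted into an argument list. A partial $n$-Metric on $X$ is a function $P:X^n\to\mathbb{R}$ such that for all $x_1,\dots,x_n,a\in X$: (1) $P(\langle x_1\rangle^n)\le P(\langle x_1\rangle^{n-1},x_2)$; (2) $P$ is invariant under permutations of its arguments; (3) $P(\langle x_1\rangle^{n-1},x_2)=P(\langle x_1\rangle^n)$ and $P(\langle x_2\rangle^{n-1},x_1)=P(\langle x_2\rangle^n)$ iff $x_1=x_2$; (4) $P(x_1,\dots,x_n)\le P(x_1,\dots,x_{n-1},a)+P(\langle a\rangle^{n-1},x_n)-P(\langle a\rangle^n)$. Two sequences $\{x_i\},\{y_i\}$ form a Cauchy pair with central distance $r\in\mathbb{R}$ if for every $\epsilon>0$ there is $N$ such that for all $i,j>N$: $r-\epsilon<\min\{P(\langle x_i\rangle^n),P(\langle y_i\rangle^n)\}\le P(\langle x_i\rangle^{n-1},y_j)<r+\epsilon$. A sequence is Cauchy with central distance $r$ if for every $\epsilon>0$ there is $N$ with $|P(x_{i_1},\dots,x_{i_n})-r|<\epsilon$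 for all $i_1,\dots,i_n>N$. A point $a$ is a limit of $\{x_i\}$ iff for every $\epsilon>0$ there is $N$ with $P(\langle a\rangle^{n-1},x_i)-P(\langle a\rangle^n)<\epsilon$ for all $i>N$; a special limit of a Cauchy sequence with central distance $r$ is a limit $a$ with $P(\langle a\rangle^n)=r$. *)

theory Defs
  imports "HOL-Analysis.Analysis"
begin

text \<open>A function of n arguments is represented as a function on lists; only lists
of length n with entries in X are relevant. replicate k a is the k-tuple of a's.\<close>

definition partial_nmetric :: "nat \<Rightarrow> 'a set \<Rightarrow> ('a list \<Rightarrow> real) \<Rightarrow> bool" where
  "partial_nmetric n X P \<longleftrightarrow>
     (\<forall>x1\<in>X. \<forall>x2\<in>X. P (replicate n x1) \<le> P (replicate (n-1) x1 @ [x2])) \<and>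
     (\<forall>xs ys. length xs = n \<and> set xs \<subseteq> X \<and> mset ys = mset xs \<longrightarrow> P xs = P ys) \<and>
     (\<forall>x1\<in>X. \<forall>x2\<in>X.
        (P (replicate (n-1) x1 @ [x2]) = P (replicate n x1) \<and>
         P (replicate (n-1) x2 @ [x1]) = P (replicate n x2)) \<longleftrightarrow> x1 = x2) \<and>
     (\<forall>xs a. length xs = n \<and> set xs \<subseteq> X \<and> a \<in> X \<longrightarrow>
        P xs \<le> P (butlast xs @ [a]) + P (replicate (n-1) a @ [last xs]) - P (replicate n a))"

definition cauchy_pair ::
  "nat \<Rightarrow> ('a list \<Rightarrow> real) \<Rightarrow> (nat \<Rightarrow> 'a) \<Rightarrow> (nat \<Rightarrow> 'a) \<Rightarrow> real \<Rightarrow> bool" where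
  "cauchy_pair n P x y r \<longleftrightarrow>
     (\<forall>\<epsilon>>0. \<exists>N. \<forall>i j. i > N \<and> j > N \<longrightarrow>
        r - \<epsilon> < min (P (replicate n (x i))) (P (replicate n (y i))) \<and>
        min (P (replicate n (x i))) (P (replicate n (y i))) \<le> P (replicate (n-1) (x i) @ [y j]) \<and>
        P (replicate (n-1) (x i) @ [y j]) < r + \<epsilon>)"

definition cauchy_seq_central ::
  "nat \<Rightarrow> ('a list \<Rightarrow> real) \<Rightarrow> (nat \<Rightarrow> 'a) \<Rightarrow> real \<Rightarrow> bool" where
  "cauchy_seq_central n P x r \<longleftrightarrow>
     (\<forall>\<epsilon>>0. \<exists>N. \<forall>is. length is = n \<and> (\<forall>i\<in>set is. i > N) \<longrightarrow>
        \<bar>P (map x is) - r\<bar> < \<epsilon>)"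

definition is_limit :: "nat \<Rightarrow> ('a list \<Rightarrow> real) \<Rightarrow> (nat \<Rightarrow> 'a) \<Rightarrow> 'a \<Rightarrow> bool" where
  "is_limit n P x a \<longleftrightarrow>
     (\<forall>\<epsilon>>0. \<exists>N. \<forall>i>N. P (replicate (n-1) a @ [x i]) - P (replicate n a) < \<epsilon>)"

definition is_special_limit ::
  "nat \<Rightarrow> ('a list \<Rightarrow> real) \<Rightarrow> (nat \<Rightarrow> 'a) \<Rightarrow> real \<Rightarrow> 'a \<Rightarrow> bool" where
  "is_special_limit n P x r a \<longleftrightarrow> is_limit n P x a \<and> P (replicate n a) = r"

end

theory Submission
  imports Defs
begin

text \<open>The quantity \<open>excess n P a b = P(\<langle>a\<rangle>\<^sup>n\<^sup>-\<^sup>1, b) - P(\<langle>a\<rangle>\<^sup>n)\<close> is a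
  non-negative quasi-metric on \<open>X\<close> (axioms (1) and (4)), and axioms (2) and (4) let one
  exchange the entries of a tuple for a common point \<open>c\<close> one at a time, so any \<open>n\<close>-tuple whose
  entries are \<open>excess\<close>-close to \<open>c\<close> in both directions has \<open>P\<close>-value close to \<open>P(\<langle>c\<rangle>\<^sup>n)\<close>.
  For a Cauchy pair, the diagonal values \<open>P(\<langle>x\<^sub>i\<rangle>\<^sup>n)\<close> tend to \<open>r\<close> and the excesses between tail
  elements of the two sequences become small, which gives both Cauchy properties at once; the
  limit is transferred by the triangle inequality \<open>excess a y\<^sub>i \<le> excess a x\<^sub>k + excess x\<^sub>k y\<^sub>i\<close>.\<close>

definition excess :: "nat \<Rightarrow> ('a list \<Rightarrow> real) \<Rightarrow> 'a \<Rightarrow> 'a \<Rightarrow> real" where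
  "excess n P a b = P (replicate (n-1) a @ [b]) - P (replicate n a)"

lemma partial_nmetric_perm:
  assumes "partial_nmetric n X P" "length xs = n" "set xs \<subseteq> X" "mset ys = mset xs"
  shows "P ys = P xs"
proof -
  have "\<forall>xs ys. length xs = n \<and> set xs \<subseteq> X \<and> mset ys = mset xs \<longrightarrow> P xs = P ys"
    using assms(1) unfolding partial_nmetric_def by (elim conjE)
  then show ?thesis using assms(2-4) by metis
qed

lemma partial_nmetric_triangle:
  assumes "partial_nmetric n X P" "length xs = n" "set xs \<subseteq> X" "a \<in> X"
  shows "P xs \<le> P (butlast xs @ [a]) + excess n P a (last xs)"
proof -
  have "\<forall>xs a. length xs = n \<and> set xs \<subseteq> X \<and> a \<in> X \<longrightarrow>
      P xs \<le> P (butlast xs @ [a]) + P (replicate (n-1) a @ [last xs]) - P (replicate n a)"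
    using assms(1) unfolding partial_nmetric_def by (elim conjE)
  then show ?thesis using assms(2-4) unfolding excess_def by fastforce
qed

lemma excess_nonneg:
  assumes "partial_nmetric n X P" "a \<in> X" "b \<in> X"
  shows "0 \<le> excess n P a b"
  using assms unfolding partial_nmetric_def excess_def by auto

lemma excess_self:
  assumes "n \<ge> 1"
  shows "excess n P a a = 0"
  using assms by (simp add: excess_def replicate_append_same flip: replicate_Suc)

lemma excess_triangle:
  assumes "partial_nmetric n X P" "n \<ge> 1" "s \<in> X" "t \<in> X" "w \<in> X"
  shows "excess n P s t \<le> excess n P s w + excess n P w t"
proof -
  have "set (replicate (n-1) s @ [t]) \<subseteq> X"
    using assms(3,4) by auto
  then have "P (replicate (n-1) s @ [t]) \<le> P (replicate (n-1) s @ [w]) + excess n P w t"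
    using partial_nmetric_triangle[OF assms(1), of "replicate (n-1) s @ [t]" w] assms by auto
  then show ?thesis unfolding excess_def by simp
qed

text \<open>The entries of \<open>us\<close> are replaced by \<open>c\<close> one at a time: rotate the entry to the last
  position by axiom (2) and pass through \<open>c\<close> by axiom (4).\<close>

lemma partial_nmetric_le_excess_sum:
  assumes "partial_nmetric n X P" "c \<in> X" "length us + m = n" "set us \<subseteq> X"
  shows "P (us @ replicate m c) \<le> P (replicate n c) + (\<Sum>t\<leftarrow>us. excess n P c t)"
  using assms(3,4)
proof (induction us arbitrary: m)
  case (Cons t us)
  have "set (replicate m c) \<subseteq> X"
    using assms(2) by auto
  have "P (t # us @ replicate m c) = P (us @ replicate m c @ [t])"
    by (rule partial_nmetric_perm[OF assms(1)]) (use Cons assms in auto)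
  also have "\<dots> \<le> P (us @ replicate m c @ [c]) + excess n P c t"
    using partial_nmetric_triangle[OF assms(1), of "us @ replicate m c @ [t]" c]
      \<open>set (replicate m c) \<subseteq> X\<close> Cons assms
    by (simp add: butlast_append)
  also have "P (us @ replicate m c @ [c]) \<le> P (replicate n c) + (\<Sum>t\<leftarrow>us. excess n P c t)"
    using Cons by (simp add: replicate_append_same flip: replicate_Suc)
  finally show ?case by simp
qed simp

lemma partial_nmetric_ge_excess_sum:
  assumes "partial_nmetric n X P" "c \<in> X" "length us + m = n" "set us \<subseteq> X"
  shows "P (replicate n c) - (\<Sum>t\<leftarrow>us. excess n P t c) \<le> P (us @ replicate m c)"
  using assms(3,4)
proof (induction us arbitrary: m)
  case (Cons t us)
  have "set (replicate m c) \<subseteq> X"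
    using assms(2) by auto
  have "P (replicate n c) - (\<Sum>t\<leftarrow>us. excess n P t c) \<le> P (us @ replicate m c @ [c])"
    using Cons by (simp add: replicate_append_same flip: replicate_Suc)
  also have "\<dots> \<le> P (us @ replicate m c @ [t]) + excess n P t c"
    using partial_nmetric_triangle[OF assms(1), of "us @ replicate m c @ [c]" t]
      \<open>set (replicate m c) \<subseteq> X\<close> Cons assms
    by (simp flip: append_assoc)
  also have "P (us @ replicate m c @ [t]) = P (t # us @ replicate m c)"
    by (rule partial_nmetric_perm[OF assms(1)]) (use Cons assms in auto)
  finally show ?case by simp
qed simp

lemma partial_nmetric_near_diagonal:
  assumes "partial_nmetric n X P" "c \<in> X" "length us = n" "set us \<subseteq> X"
    and "\<And>t. t \<in> set us \<Longrightarrow> excess n P c t \<le> B \<and> excess n P t c \<le> B"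
  shows "\<bar>P us - P (replicate n c)\<bar> \<le> real n * B"
proof -
  have "(\<Sum>t\<leftarrow>us. excess n P c t) \<le> (\<Sum>t\<leftarrow>us. B)" "(\<Sum>t\<leftarrow>us. excess n P t c) \<le> (\<Sum>t\<leftarrow>us. B)"
    using assms(5) by (auto intro: sum_list_mono)
  then show ?thesis
    using partial_nmetric_le_excess_sum[OF assms(1,2), of us 0]
      partial_nmetric_ge_excess_sum[OF assms(1,2), of us 0] assms(3,4)
    by (simp add: sum_list_triv abs_le_iff)
qed

lemma cauchy_pair_excess_bounds:
  assumes "partial_nmetric n X P" "n \<ge> 1" "\<And>i. x i \<in> X" "\<And>i. y i \<in> X"
    and "cauchy_pair n P x y r" "e > 0"
  obtains N where "\<And>i. i > N \<Longrightarrow> \<bar>P (replicate n (x i)) - r\<bar> < e"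
    and "\<And>k j. k > N \<Longrightarrow> j > N \<Longrightarrow> excess n P (x k) (y j) < 2 * e"
    and "\<And>k j. k > N \<Longrightarrow> j > N \<Longrightarrow> excess n P (y j) (x k) < 2 * real n * e"
proof -
  obtain N where N: "\<And>i j. i > N \<Longrightarrow> j > N \<Longrightarrow>
      r - e < min (P (replicate n (x i))) (P (replicate n (y i))) \<and>
      min (P (replicate n (x i))) (P (replicate n (y i))) \<le> P (replicate (n-1) (x i) @ [y j]) \<and>
      P (replicate (n-1) (x i) @ [y j]) < r + e"
    using assms(5,6) unfolding cauchy_pair_def by meson
  have diag_x: "\<bar>P (replicate n (x i)) - r\<bar> < e" if "i > N" for i
    using N[OF that that] excess_nonneg[OF assms(1,3,4), of i i]
    unfolding excess_def by (simp add: abs_less_iff)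
  have xy: "excess n P (x k) (y j) < 2 * e" if "k > N" "j > N" for k j
    using N[OF that] diag_x[OF that(1)] unfolding excess_def by (simp add: abs_less_iff)
  have "excess n P (y j) (x k) < 2 * real n * e" if "k > N" "j > N" for k j
  proof -
    have "P (replicate (n-1) (y j) @ [x k])
        \<le> P (replicate n (x k)) + real (n-1) * excess n P (x k) (y j)"
      using partial_nmetric_le_excess_sum[OF assms(1,3), of "replicate (n-1) (y j) @ [x k]" 0 k] assms
      by (simp add: sum_list_replicate set_replicate_conv_if excess_self[OF assms(2)])
    moreover have "real (n-1) * excess n P (x k) (y j) \<le> real (n-1) * (2 * e)"
      using xy[OF that] by (intro mult_left_mono) auto
    moreover have "r - e < P (replicate n (y j))"
      using N[OF that(2) that(2)] by linarith
    moreover have "P (replicate n (x k)) < r + e"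
      using diag_x[OF that(1)] by (simp add: abs_less_iff)
    moreover have "real (n-1) * (2 * e) = 2 * real n * e - 2 * e"
      using assms(2) by (simp add: algebra_simps)
    ultimately show ?thesis
      unfolding excess_def by linarith
  qed
  with diag_x xy show thesis by (rule that)
qed

lemma cauchy_pair_tuple_estimate:
  assumes "partial_nmetric n X P" "n \<ge> 1" "\<And>i. x i \<in> X" "\<And>i. y i \<in> X"
    and "cauchy_pair n P x y r" "e > 0"
  obtains N where "\<And>us. length us = n \<Longrightarrow> (\<forall>u\<in>set us. \<exists>i>N. u = x i \<or> u = y i) \<Longrightarrow>
      \<bar>P us - r\<bar> < (1 + real n * (2 * real n + 2)) * e"
proof -
  obtain N where diag: "\<And>i. i > N \<Longrightarrow> \<bar>P (replicate n (x i)) - r\<bar> < e"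
    and xy: "\<And>k j. k > N \<Longrightarrow> j > N \<Longrightarrow> excess n P (x k) (y j) < 2 * e"
    and yx: "\<And>k j. k > N \<Longrightarrow> j > N \<Longrightarrow> excess n P (y j) (x k) < 2 * real n * e"
    using cauchy_pair_excess_bounds[OF assms] by blast
  define B where "B = (2 * real n + 2) * e"
  have B: "B = 2 * e + 2 * real n * e" "2 * e \<le> B" "2 * real n * e \<le> B"
    using assms(6) unfolding B_def by (simp_all add: algebra_simps)
  have xx: "excess n P (x k) (x j) \<le> B" if "k > N" "j > N" for k j
    using excess_triangle[OF assms(1,2,3,3,4), of k j k]
      xy[OF that(1) that(1)] yx[OF that(2) that(1)] B(1)
    by linarith
  define c where "c = x (Suc N)"
  have near_c: "excess n P c u \<le> B \<and> excess n P u c \<le> B" if u: "\<exists>i>N. u = x i \<or> u = y i" for u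
  proof -
    have N': "Suc N > N" by simp
    obtain i where i: "i > N" "u = x i \<or> u = y i" using u by blast
    then consider "u = x i" | "u = y i" by auto
    then show ?thesis
    proof cases
      case 1
      then show ?thesis using xx[OF N' i(1)] xx[OF i(1) N'] unfolding c_def by simp
    next
      case 2
      then show ?thesis using xy[OF N' i(1)] yx[OF N' i(1)] B(2,3) unfolding c_def by simp
    qed
  qed
  have "\<bar>P us - r\<bar> < (1 + real n * (2 * real n + 2)) * e"
    if "length us = n" "\<forall>u\<in>set us. \<exists>i>N. u = x i \<or> u = y i" for us
  proof -
    have "set us \<subseteq> X" using that(2) assms(3,4) by auto
    then have "\<bar>P us - P (replicate n c)\<bar> \<le> real n * B"
      using partial_nmetric_near_diagonal[OF assms(1), of c us B] near_c that assms(3)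
      unfolding c_def by blast
    moreover have "\<bar>P (replicate n c) - r\<bar> < e"
      using diag[of "Suc N"] unfolding c_def by simp
    moreover have "(1 + real n * (2 * real n + 2)) * e = e + real n * B"
      unfolding B_def by (simp add: algebra_simps)
    ultimately show ?thesis unfolding abs_le_iff abs_less_iff by linarith
  qed
  with that show thesis by blast
qed

lemma cauchy_pair_cauchy_seq_central:
  assumes "partial_nmetric n X P" "n \<ge> 1" "\<And>i. x i \<in> X" "\<And>i. y i \<in> X"
    and "cauchy_pair n P x y r" "\<And>i. z i = x i \<or> z i = y i"
  shows "cauchy_seq_central n P z r"
  unfolding cauchy_seq_central_def
proof (intro allI impI)
  fix \<epsilon> :: real assume "\<epsilon> > 0"
  define C where "C = 1 + real n * (2 * real n + 2)"
  have "C > 0" unfolding C_def by (simp add: add_pos_nonneg)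
  then obtain N where N: "\<And>us. length us = n \<Longrightarrow> (\<forall>u\<in>set us. \<exists>i>N. u = x i \<or> u = y i) \<Longrightarrow>
      \<bar>P us - r\<bar> < C * (\<epsilon> / C)"
    using cauchy_pair_tuple_estimate[OF assms(1-5), of "\<epsilon> / C"] \<open>\<epsilon> > 0\<close> unfolding C_def by auto
  have "\<bar>P (map z is) - r\<bar> < \<epsilon>" if "length is = n \<and> (\<forall>i\<in>set is. i > N)" for "is"
    using N[of "map z is"] that assms(6) \<open>C > 0\<close> by auto
  then show "\<exists>N. \<forall>is. length is = n \<and> (\<forall>i\<in>set is. i > N) \<longrightarrow> \<bar>P (map z is) - r\<bar> < \<epsilon>"
    by blast
qed

lemma cauchy_pair_is_limit:
  assumes "partial_nmetric n X P" "n \<ge> 1" "\<And>i. x i \<in> X" "\<And>i. y i \<in> X"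
    and "cauchy_pair n P x y r" "a \<in> X" "is_limit n P x a"
  shows "is_limit n P y a"
  unfolding is_limit_def
proof (intro allI impI)
  fix \<epsilon> :: real assume "\<epsilon> > 0"
  obtain N1 where N1: "\<And>i. i > N1 \<Longrightarrow> excess n P a (x i) < \<epsilon> / 2"
    using assms(7) \<open>\<epsilon> > 0\<close> unfolding is_limit_def excess_def by (meson half_gt_zero)
  obtain N2 where N2: "\<And>k j. k > N2 \<Longrightarrow> j > N2 \<Longrightarrow> excess n P (x k) (y j) < 2 * (\<epsilon> / 4)"
    using cauchy_pair_excess_bounds[OF assms(1-5), of "\<epsilon> / 4"] \<open>\<epsilon> > 0\<close>
    by (metis divide_pos_pos zero_less_numeral)
  define k where "k = Suc (max N1 N2)"
  have "excess n P a (y i) < \<epsilon>" if "i > max N1 N2" for i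
  proof -
    have "k > N1" "k > N2" "i > N2" using that unfolding k_def by auto
    then show ?thesis
      using excess_triangle[OF assms(1,2,6,4,3), of i k] N1[of k] N2[of k i] by linarith
  qed
  then show "\<exists>N. \<forall>i>N. P (replicate (n-1) a @ [y i]) - P (replicate n a) < \<epsilon>"
    unfolding excess_def by blast
qed

theorem lemma4p19:
  fixes n :: nat and X :: "'a set" and P :: "'a list \<Rightarrow> real"
    and x y :: "nat \<Rightarrow> 'a" and r :: real
  assumes "n \<ge> 2"
    and "partial_nmetric n X P"
    and "\<And>i. x i \<in> X" and "\<And>i. y i \<in> X"
    and "cauchy_pair n P x y r"
  shows "cauchy_seq_central n P x r \<and> cauchy_seq_central n P y r \<and>
         (\<forall>a\<in>X. is_limit n P x a \<longrightarrow> is_limit n P y a) \<and>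
         (\<forall>a\<in>X. is_special_limit n P x r a \<longrightarrow> is_special_limit n P y r a)"
proof -
  have "n \<ge> 1" using assms(1) by simp
  note hyps = assms(2) this assms(3-5)
  have "cauchy_seq_central n P x r" "cauchy_seq_central n P y r"
    by (rule cauchy_pair_cauchy_seq_central[OF hyps]; simp)+
  moreover have "\<forall>a\<in>X. is_limit n P x a \<longrightarrow> is_limit n P y a"
    using cauchy_pair_is_limit[OF hyps] by blast
  ultimately show ?thesis unfolding is_special_limit_def by blast
qed

end
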